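(* Let $n\geq2$, $m\geq1$ be integers, $\alpha,\beta\in\mathbb{C}$, let $\psi\in\mathbb{R}$ satisfy $\beta-\alpha=|\beta-\alpha|e^{i\psi}$, and let $T^0_{\alpha,\beta}=e^{-i\psi}J_n(0)\oplus|\beta-\alpha|I_m\in M_{n+m}(\mathbb{C})$. Let $k\in\{1,\ldots,n\}$. Then for $\theta\in[0,2\pi]$, $$\lambda_k(\operatorname{Re}(e^{i\theta}T^0_{\alpha,\beta}))=\begin{cases}\cos\psi_{k,m}, & \theta\in C_{k,m},\\ |\beta-\alpha|\cos\theta, & \theta\in[0,2\pi]\setminus(D_k\cup C_{k,m}),\\ \cos\phi_k, & \theta\in D_k.\end{cases}$$
   Context: $J_n(0)$ is the $n\times n$ Jordan block with eigenvalue $0$ (ones on the superdiagonal, zeros elsewhere). For a square matrix $A$, $\operatorname{Re}A=(A+A^* )/2$, and $\lambda_1(A)\geq\lambda_2(A)\geq\cdots$ denote the eigenvalues of the Hermitian matrix in question, in non-increasing order counted with multiplicity. $\phi_k=\frac{k\pi}{n+1}$, $\psi_{k,m}=\frac{(k-m)\pi}{n+1}$; $D_k=\{\theta\in\mathbb{R}:\ |\beta-\alpha|\cos\theta\leq\cos\phi_k\}$; $C_{k,m}=\{\theta\in\mathbb{R}:\ |\beta-\alpha|\cos\theta>\cos\psi_{k,m}\}$ if $k>m$ and $C_{k,m}=\emptyset$ if $k\leq m$. *)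

theory Defs
  imports Complex_Main "Jordan_Normal_Form.Char_Poly" "Jordan_Normal_Form.Schur_Decomposition"
begin

definition jordan0 :: "nat \<Rightarrow> complex mat" where
  "jordan0 n = mat n n (\<lambda>(i,j). if j = Suc i then 1 else 0)"

definition dsum :: "complex mat \<Rightarrow> complex mat \<Rightarrow> complex mat" where
  "dsum A B = four_block_mat A (0\<^sub>m (dim_row A) (dim_col B)) (0\<^sub>m (dim_row B) (dim_col A)) B"

definition ReM :: "complex mat \<Rightarrow> complex mat" where
  "ReM A = (1/2 :: complex) \<cdot>\<^sub>m (A + mat_adjoint A)"

text \<open>Eigenvalues (with multiplicity, as roots of the characteristic polynomial) of a
  Hermitian matrix, as reals in non-increasing order; lambda_k A is the k-th one (k \<ge> 1).\<close>
definition eigs_desc :: "complex mat \<Rightarrow> real list" where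
  "eigs_desc A = rev (sorted_list_of_multiset (image_mset Re (proots (char_poly A))))"

definition lambda_k :: "nat \<Rightarrow> complex mat \<Rightarrow> real" where
  "lambda_k k A = eigs_desc A ! (k - 1)"

definition T0 :: "nat \<Rightarrow> nat \<Rightarrow> complex \<Rightarrow> complex \<Rightarrow> real \<Rightarrow> complex mat" where
  "T0 n m \<alpha> \<beta> \<psi> = dsum (exp (- \<i> * of_real \<psi>) \<cdot>\<^sub>m jordan0 n)
                          (of_real (cmod (\<beta> - \<alpha>)) \<cdot>\<^sub>m 1\<^sub>m m)"

definition phi :: "nat \<Rightarrow> nat \<Rightarrow> real" where
  "phi n k = real k * pi / (real n + 1)"

definition psi_km :: "nat \<Rightarrow> nat \<Rightarrow> nat \<Rightarrow> real" where
  "psi_km n k m = (real k - real m) * pi / (real n + 1)"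

text \<open>D_k and C_{k,m}; r stands for |beta - alpha|.\<close>
definition D_set :: "nat \<Rightarrow> real \<Rightarrow> nat \<Rightarrow> real set" where
  "D_set n r k = {\<theta>. r * cos \<theta> \<le> cos (phi n k)}"

definition C_set :: "nat \<Rightarrow> real \<Rightarrow> nat \<Rightarrow> nat \<Rightarrow> real set" where
  "C_set n r k m = (if k > m then {\<theta>. r * cos \<theta> > cos (psi_km n k m)} else {})"

end

theory Submission
  imports Defs
begin

text \<open>
  The Hermitian part of e^(i \<theta>) T0 is block diagonal, Re (w J_n(0)) \<oplus> r cos \<theta> I_m with
  w = e^(i (\<theta> - \<psi>)) and r = |\<beta> - \<alpha>|. For |w| = 1 the tridiagonal block has the n distinct
  eigenvalues cos \<phi>_j, with discrete sine eigenvectors, so the spectrum is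
  cos \<phi>_1 > ... > cos \<phi>_n together with v = r cos \<theta> repeated m times. Counting the
  eigenvalues above v locates the k-th largest one: it is cos \<phi>_k when v \<le> cos \<phi>_k,
  it is cos \<phi>_(k-m) = cos \<psi>_(k,m) when v exceeds that value, and it is v in between.
\<close>

definition kth_largest :: "nat \<Rightarrow> 'a :: linorder multiset \<Rightarrow> 'a" where
  "kth_largest k M = rev (sorted_list_of_multiset M) ! (k - 1)"

lemma size_filter_mset_mono:
  assumes "\<And>x. P x \<Longrightarrow> Q x"
  shows "size (filter_mset P M) \<le> size (filter_mset Q M)"
  by (intro size_mset_mono filter_mset_mono_strong) (auto simp: assms)

lemma kth_largest_eqI:
  fixes M :: "'a :: linorder multiset"
  assumes gt: "size (filter_mset (\<lambda>x. v < x) M) < k"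
    and ge: "k \<le> size (filter_mset (\<lambda>x. v \<le> x) M)"
  shows "kth_largest k M = v"
proof -
  define zs where "zs = rev (sorted_list_of_multiset M)"
  define x where "x = zs ! (k - 1)"
  have M: "M = mset zs" and sorted_zs: "sorted_wrt (\<ge>) zs"
    by (simp_all add: zs_def sorted_wrt_rev)
  have size_filter: "size (filter_mset P M) = length (filter P zs)" for P
    unfolding M by (metis mset_filter size_mset)
  have k: "0 < k" "k \<le> length zs"
    using gt ge length_filter_le[of "\<lambda>x. v \<le> x" zs] unfolding size_filter by linarith+
  have mono: "zs ! j \<le> zs ! i" if "i \<le> j" "j < length zs" for i j
    using sorted_zs that by (metis le_neq_implies_less order_refl sorted_wrt_nth_less)
  have "\<forall>y \<in> set (take k zs). x \<le> y"
    using k by (auto simp: x_def in_set_conv_nth intro!: mono; linarith)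
  then have x_ge: "k \<le> size (filter_mset (\<lambda>y. x \<le> y) M)"
    using k unfolding size_filter
    by (metis append_take_drop_id filter_True filter_append length_append length_take le_add1 min.absorb2)
  have x_gt: "size (filter_mset (\<lambda>y. x < y) M) < k"
  proof -
    have "\<forall>y \<in> set (drop (k - 1) zs). y \<le> x"
      using k by (auto simp: x_def in_set_conv_nth intro!: mono; linarith)
    then have "filter (\<lambda>y. x < y) (drop (k - 1) zs) = []"
      by (auto simp: filter_empty_conv)
    then have "length (filter (\<lambda>y. x < y) zs) = length (filter (\<lambda>y. x < y) (take (k - 1) zs))"
      by (metis append_take_drop_id filter_append append_Nil2)
    also have "\<dots> \<le> k - 1"
      using length_filter_le le_trans length_take min.cobounded2 by metis
    finally show ?thesis
      unfolding size_filter using k by linarith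
  qed
  have "\<not> v < x"
  proof
    assume "v < x"
    then have "size (filter_mset (\<lambda>y. x \<le> y) M) \<le> size (filter_mset (\<lambda>y. v < y) M)"
      by (intro size_filter_mset_mono) auto
    with x_ge gt show False by linarith
  qed
  moreover have "\<not> x < v"
  proof
    assume "x < v"
    then have "size (filter_mset (\<lambda>y. v \<le> y) M) \<le> size (filter_mset (\<lambda>y. x < y) M)"
      by (intro size_filter_mset_mono) auto
    with x_gt ge show False by linarith
  qed
  ultimately show ?thesis
    unfolding kth_largest_def zs_def[symmetric] x_def[symmetric] by simp
qed

lemma size_filter_image_mset_plus_replicate:
  assumes "finite A"
  shows "size (filter_mset P (image_mset f (mset_set A) + replicate_mset m v)) =
    card {j \<in> A. P (f j)} + (if P v then m else 0)"
proof -
  have "filter_mset P (replicate_mset m v) = (if P v then replicate_mset m v else {#})"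
    by (induction m) auto
  then show ?thesis
    using assms by (simp add: filter_mset_image_mset)
qed

lemma kth_largest_image_plus_replicate:
  fixes c :: "nat \<Rightarrow> 'a :: linorder"
  assumes dec: "\<And>i j. i \<in> {1..n} \<Longrightarrow> j \<in> {1..n} \<Longrightarrow> i < j \<Longrightarrow> c j < c i"
    and k: "k \<in> {1..n}"
  shows "kth_largest k (image_mset c (mset_set {1..n}) + replicate_mset m v) =
    (if v \<le> c k then c k else if m < k \<and> c (k - m) < v then c (k - m) else v)"
proof -
  let ?M = "image_mset c (mset_set {1..n}) + replicate_mset m v"
  have count: "size (filter_mset P ?M) = card {j \<in> {1..n}. P (c j)} + (if P v then m else 0)" for P
    by (rule size_filter_image_mset_plus_replicate) simp
  have less_iff: "c i < c j \<longleftrightarrow> j < i" if "i \<in> {1..n}" "j \<in> {1..n}" for i j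
    using dec[OF that] dec[OF that(2,1)] by (cases i j rule: linorder_cases) auto
  have le_iff: "c i \<le> c j \<longleftrightarrow> j \<le> i" if "i \<in> {1..n}" "j \<in> {1..n}" for i j
    using less_iff[OF that(2,1)] by (metis not_less)
  have above: "{j \<in> {1..n}. c i < c j} = {1..<i}" "{j \<in> {1..n}. c i \<le> c j} = {1..i}"
    if "i \<in> {1..n}" for i
    using that less_iff[OF that] le_iff[OF that] by auto
  consider "v \<le> c k" | "c k < v" "m < k" "c (k - m) < v" | "c k < v" "\<not> (m < k \<and> c (k - m) < v)"
    by (meson not_le)
  then show ?thesis
  proof cases
    case 1
    have "kth_largest k ?M = c k"
      using 1 k by (intro kth_largest_eqI) (unfold count above[OF k], auto simp: not_less)
    with 1 show ?thesis by simp
  next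
    case 2
    then have "k - m \<in> {1..n}" using k by auto
    with 2 have "kth_largest k ?M = c (k - m)"
      by (intro kth_largest_eqI) (unfold count above[OF \<open>k - m \<in> {1..n}\<close>], auto)
    with 2 show ?thesis by auto
  next
    case 3
    have "{j \<in> {1..n}. v < c j} \<subseteq> {1..<k}"
      using 3 k less_iff[of k] by (auto dest: less_trans)
    then have "card {j \<in> {1..n}. v < c j} < k"
      using k card_mono[of "{1..<k}" "{j \<in> {1..n}. v < c j}"] by fastforce
    moreover have "k \<le> card {j \<in> {1..n}. v \<le> c j} + m"
    proof (cases "m < k")
      case True
      have "{1..k - m} \<subseteq> {j \<in> {1..n}. v \<le> c j}"
      proof
        fix j assume j: "j \<in> {1..k - m}"
        then have "c (k - m) \<le> c j"
          using True k less_iff[of j "k - m"] by (simp add: not_less[symmetric])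
        then show "j \<in> {j \<in> {1..n}. v \<le> c j}"
          using 3 True j k by auto
      qed
      then show ?thesis
        using card_mono[of "{j \<in> {1..n}. v \<le> c j}" "{1..k - m}"] by simp
    qed simp
    ultimately have "kth_largest k ?M = v"
      using 3 by (intro kth_largest_eqI) (unfold count, auto)
    with 3 show ?thesis by auto
  qed
qed

lemma cos_phi_strict_decreasing:
  assumes "i < j" "j \<le> n + 1"
  shows "cos (phi n j) < cos (phi n i)"
proof (rule cos_monotone_0_pi)
  have "real j * pi \<le> (real n + 1) * pi"
    using assms by (intro mult_right_mono) auto
  then show "phi n j \<le> pi"
    by (simp add: phi_def field_simps)
  show "0 \<le> phi n i" "phi n i < phi n j"
    using assms by (simp_all add: phi_def divide_strict_right_mono)
qed

lemma psi_km_eq_phi: "m < k \<Longrightarrow> psi_km n k m = phi n (k - m)"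
  by (simp add: psi_km_def phi_def)

lemma dim_jordan0 [simp]: "dim_row (jordan0 n) = n" "dim_col (jordan0 n) = n"
  by (simp_all add: jordan0_def)

lemma jordan0_carrier [simp]: "jordan0 n \<in> carrier_mat n n"
  by (rule carrier_matI) simp_all

lemma dim_mat_adjoint [simp]:
  "dim_row (mat_adjoint A) = dim_col A" "dim_col (mat_adjoint A) = dim_row A"
  by (simp_all add: mat_adjoint_def)

lemma index_mat_adjoint [simp]:
  "i < dim_col A \<Longrightarrow> j < dim_row A \<Longrightarrow> mat_adjoint A $$ (i, j) = conjugate (A $$ (j, i))"
  by (simp add: mat_adjoint_def mat_of_rows_def)

lemma dim_ReM [simp]: "dim_row (ReM A) = dim_col A" "dim_col (ReM A) = dim_row A"
  by (simp_all add: ReM_def)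

lemma ReM_carrier [simp]: "A \<in> carrier_mat n n \<Longrightarrow> ReM A \<in> carrier_mat n n"
  by (rule carrier_matI) auto

lemma index_ReM [simp]:
  "i < dim_col A \<Longrightarrow> j < dim_row A \<Longrightarrow> ReM A $$ (i, j) = (A $$ (i, j) + cnj (A $$ (j, i))) / 2"
  by (simp add: ReM_def)

lemma ReM_dsum:
  assumes "A \<in> carrier_mat n n" "B \<in> carrier_mat m m"
  shows "ReM (dsum A B) = dsum (ReM A) (ReM B)"
  using assms by (intro eq_matI) (auto simp: dsum_def)

lemma smult_dsum:
  assumes "A \<in> carrier_mat n n" "B \<in> carrier_mat m m"
  shows "c \<cdot>\<^sub>m dsum A B = dsum (c \<cdot>\<^sub>m A) (c \<cdot>\<^sub>m B)"
  using assms by (intro eq_matI) (auto simp: dsum_def)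

lemma ReM_smult_one: "ReM (c \<cdot>\<^sub>m 1\<^sub>m m) = complex_of_real (Re c) \<cdot>\<^sub>m 1\<^sub>m m"
  by (intro eq_matI) (auto simp: complex_add_cnj)

lemma proots_char_poly_smult_one:
  "proots (char_poly (c \<cdot>\<^sub>m 1\<^sub>m m :: complex mat)) = replicate_mset m c"
proof -
  have "upper_triangular (c \<cdot>\<^sub>m 1\<^sub>m m)"
    by (auto simp: upper_triangular_def)
  moreover have "diag_mat (c \<cdot>\<^sub>m 1\<^sub>m m) = replicate m c"
    by (rule nth_equalityI) (auto simp: diag_mat_def)
  ultimately have "char_poly (c \<cdot>\<^sub>m 1\<^sub>m m) = [:- c, 1:] ^ m"
    by (simp add: char_poly_upper_triangular[of _ m])
  then show ?thesis
    by (simp add: proots_power)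
qed

lemma char_poly_dsum:
  fixes A B :: "complex mat"
  assumes "A \<in> carrier_mat n n" "B \<in> carrier_mat m m"
  shows "char_poly (dsum A B) = char_poly A * char_poly B"
  using assms char_poly_factorized[OF assms(1)] char_poly_factorized[OF assms(2)]
  by (intro char_poly_0_block[of _ A "0\<^sub>m n m" m n B]) (auto simp: dsum_def)

lemma proots_char_poly_dsum:
  fixes A B :: "complex mat"
  assumes "A \<in> carrier_mat n n" "B \<in> carrier_mat m m"
  shows "proots (char_poly (dsum A B)) = proots (char_poly A) + proots (char_poly B)"
proof -
  have "char_poly A \<noteq> 0" "char_poly B \<noteq> 0"
    using degree_monic_char_poly[OF assms(1)] degree_monic_char_poly[OF assms(2)] by auto
  then show ?thesis
    by (simp add: char_poly_dsum[OF assms] proots_mult)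
qed

lemma proots_char_poly_eqI:
  fixes A :: "complex mat"
  assumes A: "A \<in> carrier_mat n n" and inj: "inj_on f S" and card: "card S = n"
    and eig: "\<And>j. j \<in> S \<Longrightarrow> eigenvalue A (f j)"
  shows "proots (char_poly A) = image_mset f (mset_set S)"
proof -
  have nz: "char_poly A \<noteq> 0"
    using degree_monic_char_poly[OF A] by auto
  have "mset_set (f ` S) \<subseteq># proots (char_poly A)"
  proof (rule mset_subset_eqI)
    fix x
    have "x \<in># proots (char_poly A)" if "x \<in> f ` S"
      using that eig eigenvalue_root_char_poly[OF A] nz by auto
    then show "count (mset_set (f ` S)) x \<le> count (proots (char_poly A)) x"
      by (cases "x \<in> f ` S") (auto simp: count_mset_set' Suc_le_eq)
  qed
  moreover have "size (proots (char_poly A)) \<le> size (mset_set (f ` S))"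
    using size_proots_complex degree_monic_char_poly[OF A] card_image[OF inj] card by simp
  ultimately have "mset_set (f ` S) = proots (char_poly A)"
    by (meson leD mset_subset_size subset_mset.le_imp_less_or_eq)
  then show ?thesis
    by (simp add: image_mset_mset_set[OF inj])
qed

lemma ReM_smult_jordan0_mult_vec:
  assumes x: "x \<in> carrier_vec n" and i: "i < n"
  shows "(ReM (w \<cdot>\<^sub>m jordan0 n) *\<^sub>v x) $ i =
    (if Suc i < n then w / 2 * x $ Suc i else 0) + (if 0 < i then cnj w / 2 * x $ (i - 1) else 0)"
proof -
  have entry: "ReM (w \<cdot>\<^sub>m jordan0 n) $$ (i, l) * x $ l =
      (if l = Suc i then w / 2 * x $ l else 0) + (if l = i - 1 then (if 0 < i then cnj w / 2 * x $ l else 0) else 0)"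
    if "l < n" for l
    using i that by (auto simp: jordan0_def)
  have "(ReM (w \<cdot>\<^sub>m jordan0 n) *\<^sub>v x) $ i = (\<Sum>l = 0..<n. ReM (w \<cdot>\<^sub>m jordan0 n) $$ (i, l) * x $ l)"
    using x i by (simp add: jordan0_def scalar_prod_def)
  also have "\<dots> = (\<Sum>l = 0..<n. (if l = Suc i then w / 2 * x $ l else 0)
      + (if l = i - 1 then (if 0 < i then cnj w / 2 * x $ l else 0) else 0))"
    by (rule sum.cong) (simp_all add: entry)
  also have "\<dots> = (if Suc i < n then w / 2 * x $ Suc i else 0) + (if 0 < i then cnj w / 2 * x $ (i - 1) else 0)"
    using i by (simp add: sum.distrib)
  finally show ?thesis .
qed

lemma eigenvalue_ReM_smult_jordan0:
  assumes w: "cmod w = 1" and j: "j \<in> {1..n}"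
  shows "eigenvalue (ReM (w \<cdot>\<^sub>m jordan0 n)) (cos (phi n j))"
proof -
  define t where "t = phi n j"
  \<comment> \<open>Conjugating by the diagonal unitary diag (cnj w ^ l) turns Re (w J_n(0)) into the real
    tridiagonal matrix with 1/2 off the diagonal, whose eigenvectors are the sine vectors
    (sin ((l + 1) t))_l.\<close>
  define s where "s l = complex_of_real (sin (real l * t))" for l :: nat
  define x where "x = vec n (\<lambda>l. cnj w ^ l * s (Suc l))"
  have x_carrier: "x \<in> carrier_vec n"
    by (simp add: x_def)
  have w_cnj: "w * cnj w = 1"
    using complex_norm_square[of w] w by simp
  have s_0: "s 0 = 0"
    by (simp add: s_def)
  have s_Suc_n: "s (Suc n) = 0"
  proof -
    have "real (Suc n) * t = real j * pi"
      by (simp add: t_def phi_def field_simps)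
    then show ?thesis
      by (simp add: s_def)
  qed
  have s_rec: "s (Suc (Suc l)) + s l = 2 * cos t * s (Suc l)" for l
  proof -
    have "sin (real (Suc (Suc l)) * t) + sin (real l * t)
        = sin (real (Suc l) * t + t) + sin (real (Suc l) * t - t)"
      by (simp add: algebra_simps)
    also have "\<dots> = 2 * cos t * sin (real (Suc l) * t)"
      by (simp add: sin_add sin_diff)
    finally show ?thesis
      unfolding s_def by (metis of_real_add of_real_mult)
  qed
  have "real j * pi < (real n + 1) * pi"
    using j by (intro mult_strict_right_mono) auto
  then have "0 < t" "t < pi"
    using j by (simp_all add: t_def phi_def field_simps)
  then have "x $ 0 \<noteq> 0"
    using j sin_gt_zero[of t] by (simp add: x_def s_def)
  then have "x \<noteq> 0\<^sub>v n"
    using j by auto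
  moreover have "ReM (w \<cdot>\<^sub>m jordan0 n) *\<^sub>v x = complex_of_real (cos t) \<cdot>\<^sub>v x"
  proof (rule eq_vecI)
    fix i assume "i < dim_vec (complex_of_real (cos t) \<cdot>\<^sub>v x)"
    then have i: "i < n" by (simp add: x_def)
    have upper: "(if Suc i < n then w / 2 * x $ Suc i else 0) = cnj w ^ i / 2 * s (Suc (Suc i))"
    proof (cases "Suc i < n")
      case True
      then show ?thesis
        by (simp add: x_def) (metis w_cnj)
    next
      case False
      then have "Suc (Suc i) = Suc n"
        using i by simp
      with False show ?thesis
        using s_Suc_n by simp
    qed
    have lower: "(if 0 < i then cnj w / 2 * x $ (i - 1) else 0) = cnj w ^ i / 2 * s i"
      using i s_0 by (cases i) (auto simp: x_def)
    have "(ReM (w \<cdot>\<^sub>m jordan0 n) *\<^sub>v x) $ i = cnj w ^ i / 2 * (s (Suc (Suc i)) + s i)"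
      unfolding ReM_smult_jordan0_mult_vec[OF x_carrier i] upper lower by (simp add: algebra_simps)
    also have "\<dots> = (complex_of_real (cos t) \<cdot>\<^sub>v x) $ i"
      using i by (simp add: s_rec x_def)
    finally show "(ReM (w \<cdot>\<^sub>m jordan0 n) *\<^sub>v x) $ i = (complex_of_real (cos t) \<cdot>\<^sub>v x) $ i" .
  qed (simp add: x_def)
  ultimately show ?thesis
    using x_carrier unfolding eigenvalue_def eigenvector_def t_def by auto
qed

lemma proots_char_poly_ReM_smult_jordan0:
  assumes "cmod w = 1"
  shows "proots (char_poly (ReM (w \<cdot>\<^sub>m jordan0 n))) =
    image_mset (\<lambda>j. complex_of_real (cos (phi n j))) (mset_set {1..n})"
proof (rule proots_char_poly_eqI)
  show "inj_on (\<lambda>j. complex_of_real (cos (phi n j))) {1..n}"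
    by (rule inj_onI) (metis atLeastAtMost_iff cos_phi_strict_decreasing le_SucI less_irrefl
        linorder_neqE_nat of_real_eq_iff Suc_eq_plus1)
qed (use assms eigenvalue_ReM_smult_jordan0 in auto)

lemma ReM_exp_smult_T0:
  "ReM (exp (\<i> * of_real \<theta>) \<cdot>\<^sub>m T0 n m \<alpha> \<beta> \<psi>) =
    dsum (ReM (exp (\<i> * of_real (\<theta> - \<psi>)) \<cdot>\<^sub>m jordan0 n)) (of_real (cmod (\<beta> - \<alpha>) * cos \<theta>) \<cdot>\<^sub>m 1\<^sub>m m)"
proof -
  define e where "e = exp (\<i> * of_real \<theta>)"
  define r where "r = cmod (\<beta> - \<alpha>)"
  have jordan: "e \<cdot>\<^sub>m (exp (- \<i> * of_real \<psi>) \<cdot>\<^sub>m jordan0 n) = exp (\<i> * of_real (\<theta> - \<psi>)) \<cdot>\<^sub>m jordan0 n"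
    by (rule eq_matI) (auto simp: e_def exp_add[symmetric] algebra_simps)
  have scalar: "e \<cdot>\<^sub>m (of_real r \<cdot>\<^sub>m 1\<^sub>m m) = (e * of_real r) \<cdot>\<^sub>m 1\<^sub>m m"
    by (rule eq_matI) auto
  have re: "Re (e * of_real r) = r * cos \<theta>"
    by (simp add: e_def cis_conv_exp[symmetric])
  have J: "exp (- \<i> * of_real \<psi>) \<cdot>\<^sub>m jordan0 n \<in> carrier_mat n n"
    and I: "of_real r \<cdot>\<^sub>m 1\<^sub>m m \<in> carrier_mat m m"
    by simp_all
  have "e \<cdot>\<^sub>m T0 n m \<alpha> \<beta> \<psi> = dsum (exp (\<i> * of_real (\<theta> - \<psi>)) \<cdot>\<^sub>m jordan0 n) ((e * of_real r) \<cdot>\<^sub>m 1\<^sub>m m)"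
    unfolding T0_def e_def[symmetric] r_def[symmetric] smult_dsum[OF J I] jordan scalar ..
  also have "ReM \<dots> = dsum (ReM (exp (\<i> * of_real (\<theta> - \<psi>)) \<cdot>\<^sub>m jordan0 n)) (ReM ((e * of_real r) \<cdot>\<^sub>m 1\<^sub>m m))"
    by (rule ReM_dsum[of _ n _ m]) simp_all
  finally show ?thesis
    unfolding ReM_smult_one re by (simp only: e_def r_def)
qed

lemma eigenvalues_ReM_exp_smult_T0:
  "image_mset Re (proots (char_poly (ReM (exp (\<i> * of_real \<theta>) \<cdot>\<^sub>m T0 n m \<alpha> \<beta> \<psi>)))) =
    image_mset (\<lambda>j. cos (phi n j)) (mset_set {1..n}) + replicate_mset m (cmod (\<beta> - \<alpha>) * cos \<theta>)"
proof -
  have "cmod (exp (\<i> * of_real (\<theta> - \<psi>))) = 1"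
    by (metis cis_conv_exp norm_cis)
  have J: "ReM (exp (\<i> * of_real (\<theta> - \<psi>)) \<cdot>\<^sub>m jordan0 n) \<in> carrier_mat n n"
    and I: "of_real (cmod (\<beta> - \<alpha>) * cos \<theta>) \<cdot>\<^sub>m 1\<^sub>m m \<in> carrier_mat m m"
    by simp_all
  show ?thesis
    unfolding ReM_exp_smult_T0 proots_char_poly_dsum[OF J I] proots_char_poly_ReM_smult_jordan0[OF \<open>cmod _ = 1\<close>]
      proots_char_poly_smult_one
    by (simp add: multiset.map_comp o_def)
qed

lemma lambda_k_eq_kth_largest: "lambda_k k A = kth_largest k (image_mset Re (proots (char_poly A)))"
  by (simp add: lambda_k_def eigs_desc_def kth_largest_def)

theorem lemma3p1:
  fixes n m k :: nat and \<alpha> \<beta> :: complex and \<psi> \<theta> :: real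
  assumes "n \<ge> 2" and "m \<ge> 1"
    and "\<beta> - \<alpha> = of_real (cmod (\<beta> - \<alpha>)) * exp (\<i> * of_real \<psi>)"
    and "k \<in> {1..n}"
    and "\<theta> \<in> {0..2*pi}"
  shows "(\<theta> \<in> C_set n (cmod (\<beta> - \<alpha>)) k m \<longrightarrow>
            lambda_k k (ReM (exp (\<i> * of_real \<theta>) \<cdot>\<^sub>m T0 n m \<alpha> \<beta> \<psi>)) = cos (psi_km n k m))
       \<and> (\<theta> \<notin> D_set n (cmod (\<beta> - \<alpha>)) k \<union> C_set n (cmod (\<beta> - \<alpha>)) k m \<longrightarrow>
            lambda_k k (ReM (exp (\<i> * of_real \<theta>) \<cdot>\<^sub>m T0 n m \<alpha> \<beta> \<psi>)) = cmod (\<beta> - \<alpha>) * cos \<theta>)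
       \<and> (\<theta> \<in> D_set n (cmod (\<beta> - \<alpha>)) k \<longrightarrow>
            lambda_k k (ReM (exp (\<i> * of_real \<theta>) \<cdot>\<^sub>m T0 n m \<alpha> \<beta> \<psi>)) = cos (phi n k))"
proof -
  \<comment> \<open>Only k \<in> {1..n} and m \<ge> 1 are used: the spectrum does not depend on n \<ge> 2, on the
    range of \<theta>, or on \<psi> being an argument of \<beta> - \<alpha>.\<close>
  define L where "L = lambda_k k (ReM (exp (\<i> * of_real \<theta>) \<cdot>\<^sub>m T0 n m \<alpha> \<beta> \<psi>))"
  define v where "v = cmod (\<beta> - \<alpha>) * cos \<theta>"
  have k: "k \<in> {1..n}" by fact
  have L: "L = (if v \<le> cos (phi n k) then cos (phi n k)
      else if m < k \<and> cos (phi n (k - m)) < v then cos (phi n (k - m)) else v)"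
    unfolding L_def lambda_k_eq_kth_largest eigenvalues_ReM_exp_smult_T0 v_def
    using k by (intro kth_largest_image_plus_replicate cos_phi_strict_decreasing) auto
  have C_iff: "\<theta> \<in> C_set n (cmod (\<beta> - \<alpha>)) k m \<longleftrightarrow> m < k \<and> cos (phi n (k - m)) < v"
    by (auto simp: C_set_def v_def psi_km_eq_phi)
  have D_iff: "\<theta> \<in> D_set n (cmod (\<beta> - \<alpha>)) k \<longleftrightarrow> v \<le> cos (phi n k)"
    by (simp add: D_set_def v_def)
  have C_not_D: "\<not> v \<le> cos (phi n k)" if "m < k" "cos (phi n (k - m)) < v"
  proof -
    have "cos (phi n k) < cos (phi n (k - m))"
      using k \<open>m \<ge> 1\<close> that(1) by (intro cos_phi_strict_decreasing) auto
    then show ?thesis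
      using that(2) by linarith
  qed
  show ?thesis
    unfolding L_def[symmetric] v_def[symmetric] Un_iff C_iff D_iff L
    using C_not_D by (simp add: psi_km_eq_phi)
qed

end
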